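(* Let $\Gamma\subseteq\mathrm{Aff}(\mathbb{R}^n)$ be an $n$-dimensional crystallographic group whose subgroup of pure translations is exactly $\mathbb{Z}^n$, with holonomy group $F$, and let $D\in N_{\mathrm{GL}_n(\mathbb{Z})}(F)$. Then the set $\{R(\varphi)\mid\varphi\in\mathrm{Aut}(\Gamma)\text{ with }\varphi|_{\mathbb{Z}^n}=D\}$ is finite.
   Context: $\mathrm{Aff}(\mathbb{R}^n)=\mathbb{R}^n\rtimes\mathrm{GL}_n(\mathbb{R})$ with multiplication $(d_1,D_1)(d_2,D_2)=(d_1+D_1d_2,D_1D_2)$. An $n$-dimensional crystallographic group is a discrete cocompact subgroup of $\mathbb{R}^n\rtimes O(n)$; here it is realised inside $\mathrm{Aff}(\mathbb{R}^n)$ such that $\Gamma\cap\mathbb{R}^n=\{(z,I_n)\mid z\in\mathbb{Z}^n\}$, identified with $\mathbb{Z}^n$. The holonomy group is $F=\{A\mid\exists a:\ (a,A)\in\Gamma\}\subseteq\mathrm{GL}_n(\mathbb{Z})$ (finite), and $N_{\mathrm{GL}_n(\mathbb{Z})}(F)$ is its normaliser in $\mathrm{GL}_n(\mathbb{Z})$. Every automorphism $\varphi$ of $\Gamma$ restricts to an automorphism of $\mathbb{Z}^n$, i.e. a matrix in $\mathrm{GL}_n(\mathbb{Z})$. For an automorphism $\varphi$, $R(\varphi)\in\{1,2,\dots\}\cup\{\infty\}$ is the number of classes of the equivalence relation $g\sim g'\iff\exists h\in\Gamma: g=hg'\varphi(h)^{-1}$ (Reidemeister number). *)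

theory Defs
  imports "HOL-Analysis.Analysis" "HOL-Library.Extended_Nat"
begin

text \<open>Elements of Aff(R^n) are pairs (d, D) with D invertible; the dimension n
  is the cardinality of the finite index type 'n.\<close>

type_synonym 'n aff = "(real^'n) \<times> (real^'n^'n)"

definition Aff :: "'n::finite aff set" where
  "Aff = {(d, D). invertible D}"

definition aff_mult :: "'n::finite aff \<Rightarrow> 'n aff \<Rightarrow> 'n aff" where
  "aff_mult g h = (fst g + snd g *v fst h, snd g ** snd h)"

definition aff_one :: "'n::finite aff" where
  "aff_one = (0, mat 1)"

definition aff_inv :: "'n::finite aff \<Rightarrow> 'n aff" where
  "aff_inv g = (- (matrix_inv (snd g) *v fst g), matrix_inv (snd g))"

definition aff_act :: "'n::finite aff \<Rightarrow> real^'n \<Rightarrow> real^'n" where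
  "aff_act g x = fst g + snd g *v x"

definition aff_subgroup :: "'n::finite aff set \<Rightarrow> bool" where
  "aff_subgroup G \<longleftrightarrow> G \<subseteq> Aff \<and> aff_one \<in> G \<and>
     (\<forall>g\<in>G. \<forall>h\<in>G. aff_mult g h \<in> G) \<and> (\<forall>g\<in>G. aff_inv g \<in> G)"

definition Isom :: "'n::finite aff set" where
  "Isom = {(d, A). orthogonal_matrix A}"

definition discrete_set :: "'n::finite aff set \<Rightarrow> bool" where
  "discrete_set G \<longleftrightarrow> (\<forall>x\<in>G. \<exists>e>0. \<forall>y\<in>G. dist y x < e \<longrightarrow> y = x)"

definition cocompact :: "'n::finite aff set \<Rightarrow> bool" where
  "cocompact G \<longleftrightarrow> (\<exists>K. compact K \<and> (\<Union>g\<in>G. aff_act g ` K) = UNIV)"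

definition crystallographic :: "'n::finite aff set \<Rightarrow> bool" where
  "crystallographic \<Gamma> \<longleftrightarrow> aff_subgroup \<Gamma> \<and>
     (\<exists>c\<in>Aff. let \<Gamma>' = (\<lambda>g. aff_mult (aff_mult c g) (aff_inv c)) ` \<Gamma> in
        \<Gamma>' \<subseteq> Isom \<and> discrete_set \<Gamma>' \<and> cocompact \<Gamma>')"

definition int_vec :: "real^'n \<Rightarrow> bool" where
  "int_vec z \<longleftrightarrow> (\<forall>i. z $ i \<in> \<int>)"

definition int_mat :: "real^'n^'n \<Rightarrow> bool" where
  "int_mat A \<longleftrightarrow> (\<forall>i j. A $ i $ j \<in> \<int>)"

definition lattice_transl :: "'n::finite aff set" where
  "lattice_transl = {(z, mat 1) | z. int_vec z}"

definition holonomy :: "'n::finite aff set \<Rightarrow> (real^'n^'n) set" where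
  "holonomy \<Gamma> = snd ` \<Gamma>"

definition GLZ :: "(real^'n::finite^'n) set" where
  "GLZ = {A. invertible A \<and> int_mat A \<and> int_mat (matrix_inv A)}"

definition normaliser_GLZ :: "(real^'n::finite^'n) set \<Rightarrow> (real^'n^'n) set" where
  "normaliser_GLZ F = {D \<in> GLZ. (\<lambda>A. D ** A ** matrix_inv D) ` F = F}"

definition aut :: "'n::finite aff set \<Rightarrow> ('n aff \<Rightarrow> 'n aff) set" where
  "aut \<Gamma> = {\<phi>. bij_betw \<phi> \<Gamma> \<Gamma> \<and> (\<forall>g\<in>\<Gamma>. \<forall>h\<in>\<Gamma>. \<phi> (aff_mult g h) = aff_mult (\<phi> g) (\<phi> h))}"

definition twisted_rel :: "'n::finite aff set \<Rightarrow> ('n aff \<Rightarrow> 'n aff) \<Rightarrow> ('n aff \<times> 'n aff) set" where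
  "twisted_rel \<Gamma> \<phi> = {(g, g'). g \<in> \<Gamma> \<and> g' \<in> \<Gamma> \<and>
      (\<exists>h\<in>\<Gamma>. g = aff_mult (aff_mult h g') (aff_inv (\<phi> h)))}"

definition reidemeister :: "'n::finite aff set \<Rightarrow> ('n aff \<Rightarrow> 'n aff) \<Rightarrow> enat" where
  "reidemeister \<Gamma> \<phi> =
     (if finite (\<Gamma> // twisted_rel \<Gamma> \<phi>) then enat (card (\<Gamma> // twisted_rel \<Gamma> \<phi>)) else \<infinity>)"

end

theory Submission
  imports Defs
begin

(* Fix an automorphism phi0 restricting to D on the lattice. Every other such phi has the same
   linear parts, since lin(phi g) D = D lin(g), so the translation parts of phi and phi0 differ by
   an integral cocycle c on the holonomy group F, twisted by the linear parts B_A of phi0. F is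
   finite, its elements being integral matrices conjugate to orthogonal ones. Averaging the cocycle
   identity over F gives |F| c(A) = S - B_A S with S the sum of c over F, so phi is determined by
   the integral vector S. Conjugating phi by the lattice translation w does not change R(phi) and
   replaces S by S + |F| w; hence S may be taken in {0, ..., |F| - 1}^n, and only finitely many
   Reidemeister numbers occur. *)

lemma
  fixes A :: "'a::semiring_1^'n^'n"
  assumes "invertible A"
  shows matrix_inv_right: "A ** matrix_inv A = mat 1"
    and matrix_inv_left: "matrix_inv A ** A = mat 1"
  using someI_ex[OF assms[unfolded invertible_def]] unfolding matrix_inv_def by auto

lemma matrix_inv_mat_1: "matrix_inv (mat 1 :: 'a::semiring_1^'n^'n) = mat 1"
proof -
  have "invertible (mat 1 :: 'a^'n^'n)"
    unfolding invertible_def by (metis matrix_mul_lid)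
  then show ?thesis using matrix_inv_left by (metis matrix_mul_rid)
qed

lemma matrix_vector_mult_uminus: "A *v (- x) = - (A *v x)"
  for A :: "'a::ring_1^'n^'m"
  by (simp add: matrix_vector_mult_def vec_eq_iff sum_negf)

subsection \<open>The affine group\<close>

lemma aff_mult_assoc: "aff_mult (aff_mult a b) c = aff_mult a (aff_mult b c)"
  unfolding aff_mult_def
  by (simp add: matrix_mul_assoc matrix_vector_mul_assoc[symmetric]
      matrix_vector_right_distrib add.assoc)

lemma fst_aff_mult: "fst (aff_mult a b) = fst a + snd a *v fst b"
  and snd_aff_mult: "snd (aff_mult a b) = snd a ** snd b"
  unfolding aff_mult_def by simp_all

lemma aff_mult_one_left [simp]: "aff_mult aff_one g = g"
  and aff_mult_one_right [simp]: "aff_mult g aff_one = g"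
  unfolding aff_mult_def aff_one_def by auto

lemma
  assumes "invertible (snd g)"
  shows aff_mult_inv_right: "aff_mult g (aff_inv g) = aff_one"
    and aff_mult_inv_left: "aff_mult (aff_inv g) g = aff_one"
  using matrix_inv_right[OF assms] matrix_inv_left[OF assms]
  unfolding aff_mult_def aff_inv_def aff_one_def
  by (simp_all add: matrix_vector_mul_assoc matrix_vector_mult_uminus)

lemma aff_mult_inv_eq_iff:
  assumes "invertible (snd w)"
  shows "aff_mult y (aff_inv w) = x \<longleftrightarrow> y = aff_mult x w"
proof
  show "y = aff_mult x w" if "aff_mult y (aff_inv w) = x"
    using that assms by (auto simp: aff_mult_assoc aff_mult_inv_left)
  show "aff_mult y (aff_inv w) = x" if "y = aff_mult x w"
    using that assms by (simp add: aff_mult_assoc aff_mult_inv_right)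
qed

lemma aff_mult_inv_same_linear:
  assumes "snd x = snd y" "invertible (snd y)"
  shows "aff_mult x (aff_inv y) = (fst x - fst y, mat 1)"
  using assms matrix_inv_right[OF assms(2)] unfolding aff_mult_def aff_inv_def
  by (simp add: matrix_vector_mul_assoc matrix_vector_mult_uminus)

lemma aff_mult_translation_commute: "aff_mult g (z, mat 1) = aff_mult (snd g *v z, mat 1) g"
  unfolding aff_mult_def by (simp add: add.commute)

lemma aff_conj_translation:
  "aff_mult (aff_mult (w, mat 1) g) (aff_inv (w, mat 1)) = (w + fst g - snd g *v w, snd g)"
  unfolding aff_mult_def aff_inv_def by (simp add: matrix_inv_mat_1 matrix_vector_mult_uminus)

lemma aff_subgroup_invertible: "aff_subgroup G \<Longrightarrow> g \<in> G \<Longrightarrow> invertible (snd g)"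
  unfolding aff_subgroup_def Aff_def by auto

subsection \<open>Reidemeister numbers\<close>

lemma bij_betw_quotient:
  assumes f: "bij_betw f A B" and r: "r \<subseteq> A \<times> A" and s: "s \<subseteq> B \<times> B"
    and rel: "\<And>x y. x \<in> A \<Longrightarrow> y \<in> A \<Longrightarrow> (x, y) \<in> r \<longleftrightarrow> (f x, f y) \<in> s"
  shows "bij_betw (image f) (A // r) (B // s)"
proof -
  have class_image: "f ` (r `` {x}) = s `` {f x}" if x: "x \<in> A" for x
  proof
    show "f ` (r `` {x}) \<subseteq> s `` {f x}" using rel x r by auto
    show "s `` {f x} \<subseteq> f ` (r `` {x})"
    proof
      fix z assume "z \<in> s `` {f x}"
      then have z: "(f x, z) \<in> s" "z \<in> B" using s by auto
      then obtain y where "y \<in> A" "z = f y" using f by (metis bij_betw_def imageE)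
      then show "z \<in> f ` (r `` {x})" using rel x z by auto
    qed
  qed
  have "image f ` (A // r) = (\<lambda>x. s `` {f x}) ` A"
    unfolding quotient_def using class_image by (auto simp: image_iff)
  also have "\<dots> = (\<lambda>y. s `` {y}) ` (f ` A)" by auto
  also have "\<dots> = B // s" using f unfolding bij_betw_def quotient_def by auto
  finally have "image f ` (A // r) = B // s" .
  moreover have "inj_on (image f) (A // r)"
  proof -
    have "A // r \<subseteq> Pow A" using r unfolding quotient_def by auto
    then show ?thesis using f inj_on_image_Pow inj_on_subset unfolding bij_betw_def by blast
  qed
  ultimately show ?thesis unfolding bij_betw_def by blast
qed

lemma twisted_rel_subset: "twisted_rel \<Gamma> \<phi> \<subseteq> \<Gamma> \<times> \<Gamma>"
  unfolding twisted_rel_def by auto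

lemma reidemeister_eqI:
  assumes "bij_betw f \<Gamma> \<Gamma>"
    and "\<And>x y. x \<in> \<Gamma> \<Longrightarrow> y \<in> \<Gamma> \<Longrightarrow>
           (x, y) \<in> twisted_rel \<Gamma> \<phi> \<longleftrightarrow> (f x, f y) \<in> twisted_rel \<Gamma> \<psi>"
  shows "reidemeister \<Gamma> \<phi> = reidemeister \<Gamma> \<psi>"
proof -
  have "bij_betw (image f) (\<Gamma> // twisted_rel \<Gamma> \<phi>) (\<Gamma> // twisted_rel \<Gamma> \<psi>)"
    by (rule bij_betw_quotient[OF assms(1) twisted_rel_subset twisted_rel_subset assms(2)])
  then show ?thesis
    using bij_betw_finite bij_betw_same_card unfolding reidemeister_def by fastforce
qed

lemma reidemeister_cong:
  assumes "\<And>h. h \<in> \<Gamma> \<Longrightarrow> \<phi> h = \<psi> h"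
  shows "reidemeister \<Gamma> \<phi> = reidemeister \<Gamma> \<psi>"
proof -
  have "twisted_rel \<Gamma> \<phi> = twisted_rel \<Gamma> \<psi>" unfolding twisted_rel_def using assms by auto
  then show ?thesis unfolding reidemeister_def by simp
qed

lemma reidemeister_inner_conj:
  assumes \<Gamma>: "aff_subgroup \<Gamma>" and w: "w \<in> \<Gamma>" and \<phi>: "\<And>h. h \<in> \<Gamma> \<Longrightarrow> \<phi> h \<in> \<Gamma>"
    and \<psi>: "\<And>h. h \<in> \<Gamma> \<Longrightarrow> \<psi> h = aff_mult (aff_mult w (\<phi> h)) (aff_inv w)"
  shows "reidemeister \<Gamma> \<psi> = reidemeister \<Gamma> \<phi>"
proof (rule reidemeister_eqI[where f = "\<lambda>g. aff_mult g w"])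
  have mult: "\<And>a b. a \<in> \<Gamma> \<Longrightarrow> b \<in> \<Gamma> \<Longrightarrow> aff_mult a b \<in> \<Gamma>" and w': "aff_inv w \<in> \<Gamma>"
    using \<Gamma> w unfolding aff_subgroup_def by auto
  have inv: "\<And>g. g \<in> \<Gamma> \<Longrightarrow> invertible (snd g)" using \<Gamma> by (rule aff_subgroup_invertible)
  show "bij_betw (\<lambda>g. aff_mult g w) \<Gamma> \<Gamma>"
  proof (rule bij_betw_byWitness[where f' = "\<lambda>g. aff_mult g (aff_inv w)"])
    show "\<forall>g\<in>\<Gamma>. aff_mult (aff_mult g w) (aff_inv w) = g"
      by (simp add: aff_mult_assoc aff_mult_inv_right[OF inv[OF w]])
    show "\<forall>g\<in>\<Gamma>. aff_mult (aff_mult g (aff_inv w)) w = g"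
      by (simp add: aff_mult_assoc aff_mult_inv_left[OF inv[OF w]])
  qed (use w w' mult in blast)+
  fix x y assume x: "x \<in> \<Gamma>" and y: "y \<in> \<Gamma>"
  have "x = aff_mult (aff_mult k y) (aff_inv (\<psi> k)) \<longleftrightarrow>
        aff_mult x w = aff_mult (aff_mult k (aff_mult y w)) (aff_inv (\<phi> k))" if k: "k \<in> \<Gamma>" for k
  proof -
    have \<psi>k: "\<psi> k \<in> \<Gamma>" using \<psi>[OF k] mult[OF mult[OF w \<phi>[OF k]] w'] by simp
    have "x = aff_mult (aff_mult k y) (aff_inv (\<psi> k)) \<longleftrightarrow> aff_mult k y = aff_mult x (\<psi> k)"
      using aff_mult_inv_eq_iff[OF inv[OF \<psi>k], of "aff_mult k y" x] by metis
    also have "\<dots> \<longleftrightarrow>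
        aff_mult k y = aff_mult (aff_mult (aff_mult x w) (\<phi> k)) (aff_inv w)"
      unfolding \<psi>[OF k] by (simp add: aff_mult_assoc)
    also have "\<dots> \<longleftrightarrow> aff_mult (aff_mult k y) w = aff_mult (aff_mult x w) (\<phi> k)"
      using aff_mult_inv_eq_iff[OF inv[OF w], of "aff_mult (aff_mult x w) (\<phi> k)" "aff_mult k y"]
      by metis
    also have "\<dots> \<longleftrightarrow> aff_mult x w = aff_mult (aff_mult k (aff_mult y w)) (aff_inv (\<phi> k))"
      unfolding aff_mult_assoc[of k y w]
      using aff_mult_inv_eq_iff[OF inv[OF \<phi>[OF k]], of "aff_mult k (aff_mult y w)" "aff_mult x w"]
      by metis
    finally show ?thesis .
  qed
  then have "(\<exists>k\<in>\<Gamma>. x = aff_mult (aff_mult k y) (aff_inv (\<psi> k))) \<longleftrightarrow>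
      (\<exists>k\<in>\<Gamma>. aff_mult x w = aff_mult (aff_mult k (aff_mult y w)) (aff_inv (\<phi> k)))"
    by (rule bex_cong[OF refl])
  then show "(x, y) \<in> twisted_rel \<Gamma> \<psi> \<longleftrightarrow> (aff_mult x w, aff_mult y w) \<in> twisted_rel \<Gamma> \<phi>"
    unfolding twisted_rel_def using x y mult[OF x w] mult[OF y w] by simp
qed

subsection \<open>Finiteness of the holonomy group\<close>

lemma finite_vec_components: "finite T \<Longrightarrow> finite {v :: 'a^'n::finite. \<forall>i. v $ i \<in> T}"
proof -
  assume "finite T"
  then have "finite (vec_lambda ` PiE (UNIV :: 'n set) (\<lambda>_. T))" by (simp add: finite_PiE)
  moreover have "{v :: 'a^'n. \<forall>i. v $ i \<in> T} \<subseteq> vec_lambda ` PiE UNIV (\<lambda>_. T)"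
  proof
    fix v :: "'a^'n" assume "v \<in> {v. \<forall>i. v $ i \<in> T}"
    then have "vec_nth v \<in> PiE UNIV (\<lambda>_. T)" by auto
    then show "v \<in> vec_lambda ` PiE UNIV (\<lambda>_. T)" by (rule rev_image_eqI) simp
  qed
  ultimately show ?thesis by (rule finite_subset[rotated])
qed

lemma finite_Ints_abs_le: "finite {x :: real. x \<in> \<int> \<and> \<bar>x\<bar> \<le> K}"
proof (rule finite_subset)
  show "{x :: real. x \<in> \<int> \<and> \<bar>x\<bar> \<le> K} \<subseteq> of_int ` {-\<lceil>K\<rceil>..\<lceil>K\<rceil>}"
  proof
    fix x assume "x \<in> {x :: real. x \<in> \<int> \<and> \<bar>x\<bar> \<le> K}"
    then obtain k where "x = of_int k" "\<bar>of_int k\<bar> \<le> K" by (auto elim: Ints_cases)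
    moreover from this(2) have "k \<in> {-\<lceil>K\<rceil>..\<lceil>K\<rceil>}" by (auto; linarith)
    ultimately show "x \<in> of_int ` {-\<lceil>K\<rceil>..\<lceil>K\<rceil>}" by simp
  qed
qed simp

lemma onorm_orthogonal_matrix_le:
  fixes Q :: "real^'n^'n"
  assumes "orthogonal_matrix Q"
  shows "onorm ((*v) Q) \<le> 1"
proof (rule onorm_le)
  have "orthogonal_transformation ((*v) Q)"
    using assms by (simp add: orthogonal_transformation_matrix)
  then show "norm (Q *v x) \<le> 1 * norm x" for x by (simp add: orthogonal_transformation_norm)
qed

lemma abs_entry_conj_orthogonal_le:
  fixes P Q R :: "real^'n^'n"
  assumes "orthogonal_matrix Q"
  shows "\<bar>(P ** Q ** R) $ i $ j\<bar> \<le> onorm ((*v) P) * onorm ((*v) R)"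
proof -
  have "\<bar>(P ** Q ** R) $ i $ j\<bar> \<le> onorm ((*v) (P ** Q ** R))"
    by (rule matrix_component_le_onorm)
  also have "(*v) (P ** Q ** R) = (*v) P \<circ> ((*v) Q \<circ> (*v) R)"
    by (simp add: fun_eq_iff matrix_vector_mul_assoc matrix_mul_assoc)
  also have "onorm \<dots> \<le> onorm ((*v) P) * onorm ((*v) Q \<circ> (*v) R)"
    by (rule onorm_compose) (auto simp: o_def intro: bounded_linear_compose)
  also have "\<dots> \<le> onorm ((*v) P) * (onorm ((*v) Q) * onorm ((*v) R))"
    by (intro mult_left_mono onorm_compose onorm_pos_le) simp_all
  also have "\<dots> \<le> onorm ((*v) P) * onorm ((*v) R)"
    by (intro mult_left_mono mult_left_le_one_le onorm_pos_le)
      (simp_all add: onorm_orthogonal_matrix_le[OF assms])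
  finally show ?thesis .
qed

lemma finite_holonomyI:
  assumes cryst: "crystallographic \<Gamma>" and int: "\<And>g. g \<in> \<Gamma> \<Longrightarrow> int_mat (snd g)"
  shows "finite (holonomy \<Gamma>)"
proof -
  obtain c where c: "c \<in> Aff"
    and orth: "(\<lambda>g. aff_mult (aff_mult c g) (aff_inv c)) ` \<Gamma> \<subseteq> Isom"
    using cryst unfolding crystallographic_def Let_def by blast
  define C where "C = snd c"
  have C: "invertible C" using c unfolding Aff_def C_def by auto
  define K where "K = onorm ((*v) (matrix_inv C)) * onorm ((*v) C)"
  have "holonomy \<Gamma> \<subseteq> {M. \<forall>i. M $ i \<in> {v. \<forall>j. v $ j \<in> {x. x \<in> \<int> \<and> \<bar>x\<bar> \<le> K}}}"
  proof (clarify)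
    fix A i j assume "A \<in> holonomy \<Gamma>"
    then obtain g where g: "g \<in> \<Gamma>" "A = snd g" unfolding holonomy_def by auto
    define Q where "Q = C ** A ** matrix_inv C"
    have "aff_mult (aff_mult c g) (aff_inv c) \<in> Isom" using orth g by blast
    then have Q: "orthogonal_matrix Q"
      unfolding Q_def C_def Isom_def aff_mult_def aff_inv_def g(2) by auto
    have "matrix_inv C ** Q ** C = (matrix_inv C ** C) ** A ** (matrix_inv C ** C)"
      unfolding Q_def by (simp add: matrix_mul_assoc)
    then have "A = matrix_inv C ** Q ** C" by (simp add: matrix_inv_left[OF C])
    then have "\<bar>A $ i $ j\<bar> \<le> K"
      unfolding K_def using abs_entry_conj_orthogonal_le[OF Q] by simp
    then show "A $ i $ j \<in> \<int> \<and> \<bar>A $ i $ j\<bar> \<le> K"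
      using int[OF g(1)] g(2) unfolding int_mat_def by simp
  qed
  then show ?thesis
    by (rule finite_subset) (intro finite_vec_components finite_Ints_abs_le)
qed

subsection \<open>Cocycles on a finite matrix group\<close>

lemma cocycle_average:
  fixes F :: "(real^'n^'n) set" and c :: "real^'n^'n \<Rightarrow> real^'m"
    and B :: "real^'n^'n \<Rightarrow> real^'m^'m"
  assumes F: "finite F" "\<And>A A'. A \<in> F \<Longrightarrow> A' \<in> F \<Longrightarrow> A ** A' \<in> F"
    "\<And>A. A \<in> F \<Longrightarrow> invertible A"
    and cocycle: "\<And>A A'. A \<in> F \<Longrightarrow> A' \<in> F \<Longrightarrow> c (A ** A') = c A + B A *v c A'"
    and A: "A \<in> F"
  shows "real (card F) *\<^sub>R c A = sum c F - B A *v sum c F"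
proof -
  have inj: "inj_on ((**) A) F"
    by (rule inj_onI) (metis A F(3) matrix_inv_left matrix_mul_assoc matrix_mul_lid)
  then have "(**) A ` F = F"
    using F(1,2) A by (intro endo_inj_surj) auto
  then have "sum c F = sum (\<lambda>A'. c (A ** A')) F"
    using sum.reindex[OF inj, of c] by simp
  also have "\<dots> = real (card F) *\<^sub>R c A + sum (\<lambda>A'. B A *v c A') F"
    using cocycle[OF A] by (simp add: sum.distrib sum_constant_scaleR del: sum_constant)
  also have "sum (\<lambda>A'. B A *v c A') F = B A *v sum c F"
    using linear_sum[OF matrix_vector_mul_linear, of "B A" c F] by (simp add: o_def)
  finally show ?thesis by (metis add_diff_cancel_right')
qed

definition residue_box :: "nat \<Rightarrow> (real^'n::finite) set" where
  "residue_box m = {r. \<forall>i. r $ i \<in> of_int ` {0..<int m}}"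

lemma finite_residue_box: "finite (residue_box m)"
  unfolding residue_box_def by (rule finite_vec_components) simp

lemma int_vec_residue_decomp:
  fixes S :: "real^'n::finite"
  assumes S: "int_vec S" and m: "0 < m"
  obtains w r where "int_vec w" "r \<in> residue_box m" "r = S + real m *\<^sub>R w"
proof -
  define s where "s i = \<lfloor>S $ i\<rfloor>" for i
  have s: "S $ i = of_int (s i)" for i
    using S frac_eq_0_iff[of "S $ i"] unfolding int_vec_def frac_def s_def by simp
  define w :: "real^'n" where "w = (\<chi> i. - of_int (s i div int m))"
  define r :: "real^'n" where "r = (\<chi> i. of_int (s i mod int m))"
  have "r $ i = S $ i + real m * w $ i" for i
  proof -
    have "s i = int m * (s i div int m) + s i mod int m" by simp
    then have "of_int (s i) = real m * of_int (s i div int m) + of_int (s i mod int m)"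
      by (metis of_int_add of_int_mult of_int_of_nat_eq)
    then show ?thesis unfolding r_def w_def s by simp
  qed
  then have "r = S + real m *\<^sub>R w" by (simp add: vec_eq_iff)
  moreover have "r \<in> residue_box m"
    unfolding residue_box_def r_def using m by auto
  moreover have "int_vec w" unfolding int_vec_def w_def by simp
  ultimately show ?thesis using that by blast
qed

lemma int_vec_sum: "(\<And>x. x \<in> X \<Longrightarrow> int_vec (f x)) \<Longrightarrow> int_vec (sum f X)"
  unfolding int_vec_def by auto

lemma int_vec_axis: "int_vec (axis j (1::real))"
  unfolding int_vec_def axis_def by auto

subsection \<open>Crystallographic groups with lattice Z^n\<close>

locale crystallographic_lattice =
  fixes \<Gamma> :: "'n::finite aff set"
  assumes crystallographic: "crystallographic \<Gamma>"
    and lattice_translations: "{g \<in> \<Gamma>. snd g = mat 1} = lattice_transl"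
begin

lemma subgroup: "aff_subgroup \<Gamma>"
  using crystallographic unfolding crystallographic_def by simp

lemma mult_closed: "a \<in> \<Gamma> \<Longrightarrow> b \<in> \<Gamma> \<Longrightarrow> aff_mult a b \<in> \<Gamma>"
  and inv_closed: "a \<in> \<Gamma> \<Longrightarrow> aff_inv a \<in> \<Gamma>"
  and one_mem: "aff_one \<in> \<Gamma>"
  using subgroup unfolding aff_subgroup_def by auto

lemma invertible_linear_part: "g \<in> \<Gamma> \<Longrightarrow> invertible (snd g)"
  using subgroup by (rule aff_subgroup_invertible)

lemma translation_mem_iff: "(z, mat 1) \<in> \<Gamma> \<longleftrightarrow> int_vec z"
  using lattice_translations unfolding lattice_transl_def by (auto simp: set_eq_iff)

lemma int_vec_linear_part:
  assumes g: "g \<in> \<Gamma>" and z: "int_vec z"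
  shows "int_vec (snd g *v z)"
proof -
  have "aff_mult (aff_mult g (z, mat 1)) (aff_inv g) = (snd g *v z, mat 1)"
    by (simp add: aff_mult_inv_eq_iff[OF invertible_linear_part[OF g]]
        aff_mult_translation_commute)
  moreover have "aff_mult (aff_mult g (z, mat 1)) (aff_inv g) \<in> \<Gamma>"
    using g z by (simp add: mult_closed inv_closed translation_mem_iff)
  ultimately show ?thesis by (simp add: translation_mem_iff)
qed

lemma int_mat_linear_part: "g \<in> \<Gamma> \<Longrightarrow> int_mat (snd g)"
  using int_vec_linear_part[OF _ int_vec_axis]
  by (simp add: int_mat_def int_vec_def matrix_vector_mult_basis column_def)

lemma finite_holonomy: "finite (holonomy \<Gamma>)"
  using crystallographic int_mat_linear_part by (rule finite_holonomyI)

lemma holonomy_mult_closed: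
  assumes "A \<in> holonomy \<Gamma>" "A' \<in> holonomy \<Gamma>"
  shows "A ** A' \<in> holonomy \<Gamma>"
proof -
  obtain g g' where "g \<in> \<Gamma>" "g' \<in> \<Gamma>" "A = snd g" "A' = snd g'"
    using assms unfolding holonomy_def by auto
  then show ?thesis
    using mult_closed unfolding holonomy_def aff_mult_def by (metis image_eqI snd_conv)
qed

lemma card_holonomy_pos: "0 < card (holonomy \<Gamma>)"
proof -
  have "mat 1 \<in> holonomy \<Gamma>" using one_mem unfolding holonomy_def aff_one_def by force
  then show ?thesis using finite_holonomy card_gt_0_iff by blast
qed

end

locale crystallographic_lattice_aut = crystallographic_lattice \<Gamma> for \<Gamma> :: "'n::finite aff set" +
  fixes D :: "real^'n^'n"
  assumes invertible_D: "invertible D"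
begin

definition aut_restr :: "('n aff \<Rightarrow> 'n aff) set" where
  "aut_restr = {\<phi> \<in> aut \<Gamma>. \<forall>z :: real^'n. int_vec z \<longrightarrow> \<phi> (z, mat 1) = (D *v z, mat 1)}"

lemma
  assumes "\<phi> \<in> aut_restr"
  shows aut_restr_mem: "h \<in> \<Gamma> \<Longrightarrow> \<phi> h \<in> \<Gamma>"
    and aut_restr_mult: "g \<in> \<Gamma> \<Longrightarrow> h \<in> \<Gamma> \<Longrightarrow> \<phi> (aff_mult g h) = aff_mult (\<phi> g) (\<phi> h)"
    and aut_restr_translation: "int_vec z \<Longrightarrow> \<phi> (z, mat 1) = (D *v z, mat 1)"
  using assms bij_betw_apply unfolding aut_restr_def aut_def by fast+

lemma linear_part_intertwines:
  assumes \<phi>: "\<phi> \<in> aut_restr" and g: "g \<in> \<Gamma>"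
  shows "snd (\<phi> g) ** D = D ** snd g"
proof -
  have "(snd (\<phi> g) ** D) *v axis j 1 = (D ** snd g) *v axis j 1" for j
  proof -
    define z :: "real^'n" where "z = axis j 1"
    have z: "int_vec z" and Az: "int_vec (snd g *v z)"
      unfolding z_def by (simp_all add: int_vec_axis int_vec_linear_part[OF g])
    have "\<phi> (aff_mult g (z, mat 1)) = \<phi> (aff_mult (snd g *v z, mat 1) g)"
      by (simp add: aff_mult_translation_commute)
    then have "aff_mult (\<phi> g) (D *v z, mat 1) = aff_mult (D *v (snd g *v z), mat 1) (\<phi> g)"
      using g z Az
      by (simp add: aut_restr_mult[OF \<phi>] aut_restr_translation[OF \<phi>] translation_mem_iff)
    then show ?thesis
      unfolding z_def aff_mult_def by (simp add: matrix_vector_mul_assoc add.commute)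
  qed
  then show ?thesis by (simp add: matrix_vector_mult_basis column_def vec_eq_iff)
qed

lemma linear_part_eq:
  assumes "\<phi> \<in> aut_restr" "\<phi>' \<in> aut_restr" "g \<in> \<Gamma>" "g' \<in> \<Gamma>" "snd g = snd g'"
  shows "snd (\<phi> g) = snd (\<phi>' g')"
proof -
  have "snd (\<phi> g) ** D = snd (\<phi>' g') ** D"
    using assms by (simp add: linear_part_intertwines)
  then have "snd (\<phi> g) ** D ** matrix_inv D = snd (\<phi>' g') ** D ** matrix_inv D" by simp
  then have "snd (\<phi> g) ** (D ** matrix_inv D) = snd (\<phi>' g') ** (D ** matrix_inv D)"
    by (simp only: matrix_mul_assoc)
  then show ?thesis unfolding matrix_inv_right[OF invertible_D] matrix_mul_rid .
qed

lemma int_vec_translation_diff: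
  assumes "\<phi> \<in> aut_restr" "\<phi>' \<in> aut_restr" "g \<in> \<Gamma>"
  shows "int_vec (fst (\<phi> g) - fst (\<phi>' g))"
proof -
  have "snd (\<phi> g) = snd (\<phi>' g)" by (rule linear_part_eq[OF assms assms(3) refl])
  then have "(fst (\<phi> g) - fst (\<phi>' g), mat 1) = aff_mult (\<phi> g) (aff_inv (\<phi>' g))"
    using assms by (simp add: aff_mult_inv_same_linear aut_restr_mem invertible_linear_part)
  also have "\<dots> \<in> \<Gamma>" using assms by (simp add: aut_restr_mem mult_closed inv_closed)
  finally show ?thesis by (simp add: translation_mem_iff)
qed

lemma translation_diff_eq:
  assumes \<phi>: "\<phi> \<in> aut_restr" and \<phi>': "\<phi>' \<in> aut_restr" and g: "g \<in> \<Gamma>" "g' \<in> \<Gamma>"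
    and "snd g = snd g'"
  shows "fst (\<phi> g) - fst (\<phi>' g) = fst (\<phi> g') - fst (\<phi>' g')"
proof -
  define z where "z = fst g' - fst g"
  have "(z, mat 1) = aff_mult g' (aff_inv g)"
    unfolding z_def using assms by (simp add: aff_mult_inv_same_linear invertible_linear_part)
  also have "\<dots> \<in> \<Gamma>" using g by (simp add: mult_closed inv_closed)
  finally have z: "int_vec z" by (simp add: translation_mem_iff)
  have g': "g' = aff_mult (z, mat 1) g"
    unfolding z_def aff_mult_def using \<open>snd g = snd g'\<close> by (simp add: prod_eq_iff)
  have shift: "\<psi> g' = aff_mult (D *v z, mat 1) (\<psi> g)" if "\<psi> \<in> aut_restr" for \<psi>
    unfolding g' using that g z
    by (simp add: aut_restr_mult aut_restr_translation translation_mem_iff)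
  show ?thesis using shift[OF \<phi>] shift[OF \<phi>'] unfolding aff_mult_def by simp
qed

lemma translation_diff_mult:
  assumes \<phi>: "\<phi> \<in> aut_restr" and \<phi>': "\<phi>' \<in> aut_restr" and g: "g \<in> \<Gamma>" and h: "h \<in> \<Gamma>"
  shows "fst (\<phi> (aff_mult g h)) - fst (\<phi>' (aff_mult g h)) =
     (fst (\<phi> g) - fst (\<phi>' g)) + snd (\<phi>' g) *v (fst (\<phi> h) - fst (\<phi>' h))"
  unfolding aut_restr_mult[OF \<phi> g h] aut_restr_mult[OF \<phi>' g h] fst_aff_mult
    linear_part_eq[OF \<phi> \<phi>' g g refl]
  by (simp add: matrix_vector_mult_diff_distrib algebra_simps)

end

locale crystallographic_lattice_aut_base = crystallographic_lattice_aut \<Gamma> D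
  for \<Gamma> :: "'n::finite aff set" and D +
  fixes \<phi>0 :: "'n aff \<Rightarrow> 'n aff"
  assumes base: "\<phi>0 \<in> aut_restr"
begin

definition lift :: "real^'n^'n \<Rightarrow> 'n aff" where
  "lift A = inv_into \<Gamma> snd A"

definition cocycle :: "('n aff \<Rightarrow> 'n aff) \<Rightarrow> real^'n^'n \<Rightarrow> real^'n" where
  "cocycle \<phi> A = fst (\<phi> (lift A)) - fst (\<phi>0 (lift A))"

definition base_linear_part :: "real^'n^'n \<Rightarrow> real^'n^'n" where
  "base_linear_part A = snd (\<phi>0 (lift A))"

(* The map whose translation cocycle relative to phi0 is A \<mapsto> (r - B_A r) / |F|. *)
definition twist :: "real^'n \<Rightarrow> 'n aff \<Rightarrow> 'n aff" where
  "twist r g = (fst (\<phi>0 g) + inverse (real (card (holonomy \<Gamma>))) *\<^sub>R (r - snd (\<phi>0 g) *v r),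
                snd (\<phi>0 g))"

lemma
  assumes "g \<in> \<Gamma>"
  shows lift_mem: "lift (snd g) \<in> \<Gamma>" and snd_lift: "snd (lift (snd g)) = snd g"
  using assms unfolding lift_def by (simp_all add: inv_into_into f_inv_into_f)

lemma cocycle_linear_part:
  assumes "\<phi> \<in> aut_restr" "g \<in> \<Gamma>"
  shows "cocycle \<phi> (snd g) = fst (\<phi> g) - fst (\<phi>0 g)"
  unfolding cocycle_def
  using translation_diff_eq[OF assms(1) base lift_mem[OF assms(2)] assms(2) snd_lift[OF assms(2)]] .

lemma base_linear_part_linear_part: "g \<in> \<Gamma> \<Longrightarrow> base_linear_part (snd g) = snd (\<phi>0 g)"
  unfolding base_linear_part_def by (rule linear_part_eq[OF base base lift_mem _ snd_lift])

lemma int_vec_cocycle: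
  assumes "\<phi> \<in> aut_restr" "A \<in> holonomy \<Gamma>"
  shows "int_vec (cocycle \<phi> A)"
proof -
  obtain g where g: "g \<in> \<Gamma>" "A = snd g" using assms(2) unfolding holonomy_def by auto
  then have "cocycle \<phi> A = fst (\<phi> g) - fst (\<phi>0 g)" by (simp add: cocycle_linear_part[OF assms(1)])
  then show ?thesis using int_vec_translation_diff[OF assms(1) base g(1)] by simp
qed

lemma cocycle_mult:
  assumes \<phi>: "\<phi> \<in> aut_restr" and "A \<in> holonomy \<Gamma>" "A' \<in> holonomy \<Gamma>"
  shows "cocycle \<phi> (A ** A') = cocycle \<phi> A + base_linear_part A *v cocycle \<phi> A'"
proof -
  obtain g h where g: "g \<in> \<Gamma>" "A = snd g" and h: "h \<in> \<Gamma>" "A' = snd h"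
    using assms unfolding holonomy_def by auto
  have gh: "aff_mult g h \<in> \<Gamma>" "A ** A' = snd (aff_mult g h)"
    using g h by (simp_all add: mult_closed snd_aff_mult)
  have "cocycle \<phi> (A ** A') = fst (\<phi> (aff_mult g h)) - fst (\<phi>0 (aff_mult g h))"
    unfolding gh(2) by (rule cocycle_linear_part[OF \<phi> gh(1)])
  also have "\<dots> = (fst (\<phi> g) - fst (\<phi>0 g)) + snd (\<phi>0 g) *v (fst (\<phi> h) - fst (\<phi>0 h))"
    by (rule translation_diff_mult[OF \<phi> base g(1) h(1)])
  also have "\<dots> = cocycle \<phi> A + base_linear_part A *v cocycle \<phi> A'"
    unfolding g(2) h(2) cocycle_linear_part[OF \<phi> g(1)] cocycle_linear_part[OF \<phi> h(1)]
      base_linear_part_linear_part[OF g(1)] ..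
  finally show ?thesis .
qed

lemma cocycle_coboundary:
  assumes "\<phi> \<in> aut_restr" "A \<in> holonomy \<Gamma>"
  shows "real (card (holonomy \<Gamma>)) *\<^sub>R cocycle \<phi> A =
    sum (cocycle \<phi>) (holonomy \<Gamma>) - base_linear_part A *v sum (cocycle \<phi>) (holonomy \<Gamma>)"
proof (rule cocycle_average[OF finite_holonomy _ _ _ assms(2)])
  show "invertible A" if "A \<in> holonomy \<Gamma>" for A
    using that invertible_linear_part unfolding holonomy_def by auto
qed (simp_all add: holonomy_mult_closed cocycle_mult[OF assms(1)])

lemma reidemeister_eq_twist:
  assumes \<phi>: "\<phi> \<in> aut_restr"
  obtains r where "r \<in> residue_box (card (holonomy \<Gamma>))"
    "reidemeister \<Gamma> \<phi> = reidemeister \<Gamma> (twist r)"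
proof -
  define m where "m = card (holonomy \<Gamma>)"
  define S where "S = sum (cocycle \<phi>) (holonomy \<Gamma>)"
  have "int_vec S" unfolding S_def by (rule int_vec_sum) (rule int_vec_cocycle[OF \<phi>])
  then obtain w r where w: "int_vec w" and r: "r \<in> residue_box m" and rS: "r = S + real m *\<^sub>R w"
    using card_holonomy_pos int_vec_residue_decomp unfolding m_def by metis
  define \<psi> where "\<psi> h = aff_mult (aff_mult (w, mat 1) (\<phi> h)) (aff_inv (w, mat 1))" for h
  have "reidemeister \<Gamma> \<psi> = reidemeister \<Gamma> \<phi>"
    using subgroup w \<psi>_def
    by (intro reidemeister_inner_conj) (simp_all add: translation_mem_iff aut_restr_mem[OF \<phi>])
  moreover have "reidemeister \<Gamma> \<psi> = reidemeister \<Gamma> (twist r)"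
  proof (rule reidemeister_cong)
    fix h assume h: "h \<in> \<Gamma>"
    define B where "B = snd (\<phi>0 h)"
    define c where "c = cocycle \<phi> (snd h)"
    have "snd (\<phi> h) = B" unfolding B_def using linear_part_eq[OF \<phi> base h h] by simp
    then have \<psi>h: "\<psi> h = (w + fst (\<phi>0 h) + c - B *v w, B)"
      unfolding \<psi>_def c_def aff_conj_translation cocycle_linear_part[OF \<phi> h] by simp
    have "real m *\<^sub>R c = S - B *v S"
      unfolding c_def S_def m_def B_def base_linear_part_linear_part[OF h, symmetric]
      using h by (intro cocycle_coboundary[OF \<phi>]) (auto simp: holonomy_def)
    then have "r - B *v r = real m *\<^sub>R (c + w - B *v w)"
      unfolding rS by (simp add: algebra_simps matrix_vector_mult_scaleR)
    then have "inverse (real m) *\<^sub>R (r - B *v r) = c + w - B *v w"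
      using card_holonomy_pos unfolding m_def by simp
    then show "\<psi> h = twist r h"
      unfolding \<psi>h twist_def B_def[symmetric] m_def[symmetric] by (simp add: algebra_simps)
  qed
  ultimately show ?thesis using that r unfolding m_def by metis
qed

end

theorem theorem5p5:
  fixes \<Gamma> :: "'n::finite aff set" and D :: "real^'n^'n"
  assumes "crystallographic \<Gamma>"
    and "{g \<in> \<Gamma>. snd g = mat 1} = lattice_transl"
    and "D \<in> normaliser_GLZ (holonomy \<Gamma>)"
  shows "finite {reidemeister \<Gamma> \<phi> | \<phi>. \<phi> \<in> aut \<Gamma> \<and>
                   (\<forall>z. int_vec z \<longrightarrow> \<phi> (z, mat 1) = (D *v z, mat 1))}"
proof -
  interpret crystallographic_lattice_aut \<Gamma> D
    using assms by unfold_locales (simp_all add: normaliser_GLZ_def GLZ_def)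
  have set_eq: "{reidemeister \<Gamma> \<phi> | \<phi>. \<phi> \<in> aut \<Gamma> \<and>
                   (\<forall>z. int_vec z \<longrightarrow> \<phi> (z, mat 1) = (D *v z, mat 1))} = reidemeister \<Gamma> ` aut_restr"
    unfolding aut_restr_def by auto
  show ?thesis
  proof (cases "aut_restr = {}")
    case False
    then obtain \<phi>0 where "\<phi>0 \<in> aut_restr" by blast
    then interpret crystallographic_lattice_aut_base \<Gamma> D \<phi>0 by unfold_locales
    have "reidemeister \<Gamma> ` aut_restr \<subseteq>
          (\<lambda>r. reidemeister \<Gamma> (twist r)) ` residue_box (card (holonomy \<Gamma>))"
      by (auto elim: reidemeister_eq_twist)
    then show ?thesis
      unfolding set_eq by (rule finite_surj[OF finite_residue_box])
  qed (simp add: set_eq)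
qed

end
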